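(* Every convex body $Q\subset\mathbb R^d$ containing the origin admits a linear projection $P$ (a linear idempotent map) onto a one-dimensional linear subspace such that $P(Q)\subseteq Q$.
   Context: A convex body is a compact convex set with non-empty interior. *)

theory Defs
  imports "HOL-Analysis.Analysis"
begin

definition convex_body :: "'a::euclidean_space set \<Rightarrow> bool" where
  "convex_body Q \<longleftrightarrow> compact Q \<and> convex Q \<and> interior Q \<noteq> {}"

end

theory Submission
  imports Defs
begin

text \<open>Let \<open>s \<ge> 0\<close> be maximal with \<open>-s Q \<subseteq> Q\<close>. Maximality forces some point \<open>y = -s x\<^sub>0\<close>
  of \<open>-s Q\<close> onto the boundary of \<open>Q\<close>; let \<open>a\<close> be a supporting functional of \<open>Q\<close> at \<open>y\<close>
  and \<open>x\<close> a maximiser of \<open>a\<close> on \<open>Q\<close>. Then \<open>Q\<close> lies in the slab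
  \<open>-s (a \<bullet> x) \<le> a \<bullet> q \<le> a \<bullet> x\<close>, whose two bounding hyperplanes meet the line through \<open>x\<close>
  in the points \<open>-s x\<close> and \<open>x\<close> of \<open>Q\<close>. The projection onto that line along \<open>a\<^sup>\<bottom>\<close>
  therefore maps \<open>Q\<close> into the segment between them, which lies in \<open>Q\<close> by convexity.\<close>

definition line_projection :: "'a::real_inner \<Rightarrow> 'a \<Rightarrow> 'a \<Rightarrow> 'a" where
  "line_projection a x v = ((a \<bullet> v) / (a \<bullet> x)) *\<^sub>R x"

lemma linear_line_projection: "linear (line_projection a x)"
  unfolding line_projection_def
  by (intro linearI) (auto simp: inner_add_right add_divide_distrib scaleR_add_left)

lemma line_projection_idem:
  assumes "a \<bullet> x \<noteq> 0"
  shows "line_projection a x \<circ> line_projection a x = line_projection a x"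
  using assms by (auto simp: line_projection_def fun_eq_iff)

lemma range_line_projection:
  assumes "a \<bullet> x \<noteq> 0"
  shows "range (line_projection a x) = span {x}"
proof
  show "range (line_projection a x) \<subseteq> span {x}"
    by (auto simp: line_projection_def span_singleton)
  show "span {x} \<subseteq> range (line_projection a x)"
  proof
    fix z assume "z \<in> span {x}"
    then obtain c where "z = c *\<^sub>R x" by (auto simp: span_singleton)
    then have "z = line_projection a x (c *\<^sub>R x)"
      using assms by (simp add: line_projection_def)
    then show "z \<in> range (line_projection a x)" by blast
  qed
qed

lemma dim_range_line_projection:
  fixes a x :: "'a::euclidean_space"
  assumes "a \<bullet> x \<noteq> 0"
  shows "dim (range (line_projection a x)) = 1"
proof -
  have "x \<noteq> 0" using assms by auto
  then show ?thesis using assms by (simp add: range_line_projection)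
qed

lemma scaleR_in_closed_segment:
  fixes x :: "'a::real_vector"
  assumes "c \<le> t" "t \<le> d"
  shows "t *\<^sub>R x \<in> closed_segment (c *\<^sub>R x) (d *\<^sub>R x)"
proof -
  have "closed_segment (c *\<^sub>R x) (d *\<^sub>R x) = (\<lambda>u. u *\<^sub>R x) ` closed_segment c d"
    by (rule closed_segment_linear_image) (rule linear_scaleR_left)
  moreover have "t \<in> closed_segment c d"
    using assms by (simp add: closed_segment_eq_real_ivl)
  ultimately show ?thesis by blast
qed

lemma line_projection_image_subset_slab:
  fixes Q :: "'a::real_inner set"
  assumes "convex Q" and "x \<in> Q" and "c *\<^sub>R x \<in> Q" and "a \<bullet> x > 0"
    and slab: "\<And>q. q \<in> Q \<Longrightarrow> c * (a \<bullet> x) \<le> a \<bullet> q \<and> a \<bullet> q \<le> a \<bullet> x"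
  shows "line_projection a x ` Q \<subseteq> Q"
proof
  fix z assume "z \<in> line_projection a x ` Q"
  then obtain q where "q \<in> Q" and z: "z = ((a \<bullet> q) / (a \<bullet> x)) *\<^sub>R x"
    by (auto simp: line_projection_def)
  have "c \<le> (a \<bullet> q) / (a \<bullet> x)" "(a \<bullet> q) / (a \<bullet> x) \<le> 1"
    using slab[OF \<open>q \<in> Q\<close>] \<open>a \<bullet> x > 0\<close> by (simp_all add: pos_le_divide_eq)
  then have "z \<in> closed_segment (c *\<^sub>R x) (1 *\<^sub>R x)"
    unfolding z by (rule scaleR_in_closed_segment)
  then show "z \<in> Q"
    using assms(1-3) convex_contains_segment by auto
qed

lemma maximal_negative_scaling_touches_frontier:
  fixes Q :: "'a::{real_normed_vector, perfect_space} set"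
  assumes "compact Q" and "0 \<in> Q" and "Q \<noteq> {0}"
  obtains s where "s \<ge> 0" and "scaleR (- s) ` Q \<subseteq> Q" and "\<not> scaleR (- s) ` Q \<subseteq> interior Q"
proof -
  define T where "T = {t. 0 \<le> t \<and> scaleR (- t) ` Q \<subseteq> Q}"
  obtain R where "R > 0" and R: "\<And>q. q \<in> Q \<Longrightarrow> norm q \<le> R"
    using compact_imp_bounded[OF \<open>compact Q\<close>] bounded_pos by blast
  obtain w where "w \<in> Q" "w \<noteq> 0" using assms(2,3) by blast
  have "closed T"
  proof -
    have "T = {0..} \<inter> (\<Inter>q\<in>Q. (\<lambda>t. (- t) *\<^sub>R q) -` Q)"
      by (auto simp: T_def)
    moreover have "closed ((\<lambda>t. (- t) *\<^sub>R q) -` Q)" for q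
      using compact_imp_closed[OF \<open>compact Q\<close>]
      by (intro continuous_closed_vimage) (auto intro!: continuous_intros)
    ultimately show ?thesis by auto
  qed
  moreover have "bounded T"
  proof -
    have "norm t * norm w \<le> R" if "t \<in> T" for t
      using R[of "(- t) *\<^sub>R w"] that \<open>w \<in> Q\<close> by (auto simp: T_def)
    then have "norm t \<le> R / norm w" if "t \<in> T" for t
      using that \<open>w \<noteq> 0\<close> by (simp add: pos_le_divide_eq)
    then show ?thesis by (auto simp: bounded_iff)
  qed
  moreover have "0 \<in> T" using \<open>0 \<in> Q\<close> by (auto simp: T_def)
  ultimately obtain s where "s \<in> T" and s_max: "\<And>t. t \<in> T \<Longrightarrow> t \<le> s"
    using compact_attains_sup[of T] compact_eq_bounded_closed by blast
  have "\<not> scaleR (- s) ` Q \<subseteq> interior Q"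
  proof
    assume inside: "scaleR (- s) ` Q \<subseteq> interior Q"
    obtain e where "e > 0" and e: "(\<Union>y\<in>scaleR (- s) ` Q. ball y e) \<subseteq> interior Q"
      using compact_subset_open_imp_ball_epsilon_subset[OF _ open_interior inside]
        compact_scaling[OF \<open>compact Q\<close>] by blast
    define t where "t = s + e / (2 * R)"
    have scaled: "(- t) *\<^sub>R q \<in> Q" if "q \<in> Q" for q
    proof -
      have "dist ((- s) *\<^sub>R q) ((- t) *\<^sub>R q) = e / (2 * R) * norm q"
        using \<open>e > 0\<close> \<open>R > 0\<close> by (simp add: t_def dist_norm algebra_simps)
      also have "\<dots> \<le> e / (2 * R) * R"
        using R[OF that] \<open>e > 0\<close> \<open>R > 0\<close> by (intro mult_left_mono) auto
      also have "\<dots> < e" using \<open>e > 0\<close> \<open>R > 0\<close> by simp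
      finally have "(- t) *\<^sub>R q \<in> ball ((- s) *\<^sub>R q) e" by simp
      then show ?thesis using e that interior_subset by blast
    qed
    have "t \<ge> 0"
      using \<open>s \<in> T\<close> \<open>e > 0\<close> \<open>R > 0\<close> by (simp add: T_def t_def)
    then have "t \<in> T"
      using scaled by (auto simp: T_def)
    then have "t \<le> s" by (rule s_max)
    then show False
      using \<open>e > 0\<close> \<open>R > 0\<close> by (simp add: t_def divide_le_0_iff)
  qed
  then show ?thesis using that \<open>s \<in> T\<close> by (auto simp: T_def)
qed

lemma slab_through_scaled_frontier_point:
  fixes Q :: "'a::euclidean_space set"
  assumes "convex Q" and "compact Q" and "interior Q \<noteq> {}" and "s \<ge> 0"
    and "x\<^sub>0 \<in> Q" and "(- s) *\<^sub>R x\<^sub>0 \<in> Q" and "(- s) *\<^sub>R x\<^sub>0 \<notin> interior Q"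
  obtains a x where "x \<in> Q" and "a \<bullet> x > 0"
    and "\<And>q. q \<in> Q \<Longrightarrow> - s * (a \<bullet> x) \<le> a \<bullet> q \<and> a \<bullet> q \<le> a \<bullet> x"
proof -
  let ?y = "(- s) *\<^sub>R x\<^sub>0"
  have rel_int: "rel_interior Q = interior Q"
    using assms(3) rel_interior_nonempty_interior by blast
  have "?y \<in> closure Q" using assms(6) closure_subset by blast
  moreover have "?y \<notin> rel_interior Q" using assms(7) rel_int by simp
  ultimately obtain a where support: "\<And>q. q \<in> closure Q \<Longrightarrow> a \<bullet> ?y \<le> a \<bullet> q"
    and support_strict: "\<And>q. q \<in> rel_interior Q \<Longrightarrow> a \<bullet> ?y < a \<bullet> q"
    using supporting_hyperplane_relative_frontier[OF \<open>convex Q\<close>] by blast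
  have "continuous_on Q (\<lambda>v. a \<bullet> v)" by (intro continuous_intros)
  then obtain x where "x \<in> Q" and x_max: "\<And>q. q \<in> Q \<Longrightarrow> a \<bullet> q \<le> a \<bullet> x"
    using continuous_attains_sup[OF \<open>compact Q\<close>] \<open>x\<^sub>0 \<in> Q\<close> by blast
  have y_above: "- s * (a \<bullet> x) \<le> a \<bullet> ?y"
    using x_max[OF \<open>x\<^sub>0 \<in> Q\<close>] \<open>s \<ge> 0\<close> by (simp add: mult_left_mono)
  obtain z where "z \<in> interior Q" using assms(3) by blast
  then have "a \<bullet> ?y < a \<bullet> x"
    using support_strict[of z] x_max[of z] rel_int interior_subset by fastforce
  then have "(1 + s) * (a \<bullet> x) > 0"
    using y_above by (simp add: algebra_simps)
  then have "a \<bullet> x > 0"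
    using \<open>s \<ge> 0\<close> by (simp add: zero_less_mult_iff)
  moreover have "- s * (a \<bullet> x) \<le> a \<bullet> q \<and> a \<bullet> q \<le> a \<bullet> x" if "q \<in> Q" for q
    using y_above support[of q] x_max[of q] that closure_subset by fastforce
  ultimately show ?thesis using that \<open>x \<in> Q\<close> by blast
qed

theorem proposition2p1:
  fixes Q :: "'a::euclidean_space set"
  assumes "convex_body Q" and "0 \<in> Q"
  shows "\<exists>P :: 'a \<Rightarrow> 'a. linear P \<and> P \<circ> P = P \<and> dim (range P) = 1 \<and> P ` Q \<subseteq> Q"
proof -
  have "compact Q" "convex Q" "interior Q \<noteq> {}"
    using assms(1) by (auto simp: convex_body_def)
  then have "Q \<noteq> {0}" by (metis interior_singleton)
  obtain s where "s \<ge> 0" and reflected: "scaleR (- s) ` Q \<subseteq> Q"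
    and "\<not> scaleR (- s) ` Q \<subseteq> interior Q"
    using maximal_negative_scaling_touches_frontier[OF \<open>compact Q\<close> \<open>0 \<in> Q\<close> \<open>Q \<noteq> {0}\<close>] .
  then obtain x\<^sub>0 where "x\<^sub>0 \<in> Q" "(- s) *\<^sub>R x\<^sub>0 \<in> Q" "(- s) *\<^sub>R x\<^sub>0 \<notin> interior Q"
    by blast
  then obtain a x where "x \<in> Q" "a \<bullet> x > 0"
    and slab: "\<And>q. q \<in> Q \<Longrightarrow> - s * (a \<bullet> x) \<le> a \<bullet> q \<and> a \<bullet> q \<le> a \<bullet> x"
    using slab_through_scaled_frontier_point[OF \<open>convex Q\<close> \<open>compact Q\<close> \<open>interior Q \<noteq> {}\<close> \<open>s \<ge> 0\<close>]
    by blast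
  have "line_projection a x ` Q \<subseteq> Q"
    using line_projection_image_subset_slab[OF \<open>convex Q\<close> \<open>x \<in> Q\<close> _ \<open>a \<bullet> x > 0\<close> slab]
      reflected \<open>x \<in> Q\<close> by blast
  moreover have "a \<bullet> x \<noteq> 0" using \<open>a \<bullet> x > 0\<close> by simp
  ultimately show ?thesis
    using linear_line_projection line_projection_idem dim_range_line_projection by blast
qed

end
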